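(* Let $G=\{(x,R(x)) : x\in[0,1]\}$ be the graph of $R$. Then its closure in $\mathbb R^2$ is $$\overline{G}=G\cup\bigcup_{x\in\mathscr D\setminus\{1\}}\big(\{x\}\times I_x\big).$$ Moreover, for every $x\in\mathscr D\setminus\{0,1\}$, $$I_x=\Big[\liminf_{t\searrow x}R(t),\ \limsup_{t\searrow x}R(t)\Big]\quad\text{and}\quad R(x)\notin I_x.$$
   Context: Define $\rho$ on binary words: for $b=b_1b_2\dots$, $\rho(b)$ is obtained by deleting every digit $b_n=0$ and replacing every $b_n=1$ by $0$ if $n$ is odd and by $1$ if $n$ is even. For $x\in(0,1]$ let $\beta(x)$ be the unique binary expansion of $x$ with infinitely many $1$'s. Define $R:[0,1]\to[0,1]$ by $R(0)=2/3$ and, for $x\in(0,1]$, $R(x)=\sum_{n\ge1}c_n2^{-n}$ where $c=\rho(\beta(x))$. $\mathscr D$ is the set of dyadic rationals in $[0,1]$. For $x\in\mathscr D\setminus\{1\}$ with finite binary expression $x=0.x_1x_2\dots x_n$ (terminal zeros irrelevant; empty word for $x=0$), let $u=\rho(x_1\dots x_n)$ (a finite word) and let $I_x$ be the closed interval of all $y\in[0,1]$ having a binary expansion beginning with $u$, i.e. $I_x=[0.u000\dots,\,0.u111\dots]$; in particular $I_0=[0,1]$. *)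

theory Defs
  imports "HOL-Analysis.Analysis" "HOL-Library.Infinite_Set"
begin

text \<open>Binary words: a finite word is a bool list (True = digit 1), w!0 = b_1;
  an infinite word is a function nat => bool, b 0 = b_1.\<close>

text \<open>rho on finite words: keep the 1-digits; the digit at (1-based) position n
  becomes 0 if n is odd and 1 if n is even. With 0-based index i, n = i+1, so
  the output digit is 1 iff i is odd.\<close>
definition rho_list :: "bool list \<Rightarrow> bool list" where
  "rho_list w = map odd (filter (\<lambda>i. w ! i) [0..<length w])"

text \<open>rho on infinite words with infinitely many 1's: the n-th output digit
  comes from the n-th 1 of the input.\<close>
definition rho_inf :: "(nat \<Rightarrow> bool) \<Rightarrow> (nat \<Rightarrow> bool)" where
  "rho_inf b = (\<lambda>n. odd (enumerate {i. b i} n))"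

definition bval :: "(nat \<Rightarrow> bool) \<Rightarrow> real" where
  "bval b = (\<Sum>n. of_bool (b n) / 2 ^ Suc n)"

definition wval :: "bool list \<Rightarrow> real" where
  "wval w = (\<Sum>i<length w. of_bool (w ! i) / 2 ^ Suc i)"

definition beta :: "real \<Rightarrow> (nat \<Rightarrow> bool)" where
  "beta x = (THE b. infinite {n. b n} \<and> (\<lambda>n. of_bool (b n) / 2 ^ Suc n) sums x)"

definition R :: "real \<Rightarrow> real" where
  "R x = (if x = 0 then 2/3 else bval (rho_inf (beta x)))"

definition dyadics :: "real set" where
  "dyadics = {x. \<exists>(k::nat) (n::nat). x = real k / 2 ^ n \<and> 0 \<le> x \<and> x \<le> 1}"

text \<open>I_x: pick a finite binary expression of x (terminal zeros irrelevant),
  u = rho of it, and I_x = [0.u000..., 0.u111...].\<close>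
definition Iint :: "real \<Rightarrow> real set" where
  "Iint x = (let u = rho_list (SOME w. wval w = x)
             in {wval u .. wval u + 1 / 2 ^ length u})"

end

theory Submission
  imports Defs
begin

text \<open>\<open>R\<close> is self-similar: on the dyadic cylinder \<open>{0.w + s / 2^|w| | 0 < s \<le> 1}\<close> of a
  finite word \<open>w\<close>, \<open>R\<close> is \<open>R\<close> or \<open>1 - R\<close> (by the parity of \<open>|w|\<close>) rescaled affinely onto the
  interval of reals whose binary expansion begins with \<open>rho w\<close>. Since \<open>R\<close> maps \<open>(0, 1]\<close> onto
  \<open>[0, 1]\<close>, just to the right of a dyadic \<open>x = 0.w\<close> the function \<open>R\<close> stays in \<open>I\<^sub>x\<close> and takes
  every value of \<open>I\<^sub>x\<close> arbitrarily close to \<open>x\<close>; this gives the vertical segments and the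
  \<open>liminf\<close> and \<open>limsup\<close>. Elsewhere the cylinders of the prefixes of \<open>beta x\<close> are
  neighbourhoods of \<open>x\<close> (from the left, or on both sides) whose \<open>rho\<close>-intervals shrink to
  \<open>R x\<close>, so no other limit points occur.\<close>

section \<open>Finite binary words\<close>

lemma wval_Nil [simp]: "wval [] = 0"
  by (simp add: wval_def)

lemma wval_Cons: "wval (b # w) = (of_bool b + wval w) / 2"
proof -
  have "wval (b # w) = of_bool b / 2 + (\<Sum>i<length w. of_bool (w ! i) / 2 ^ Suc (Suc i))"
    unfolding wval_def by (simp add: sum.lessThan_Suc_shift del: sum.lessThan_Suc)
  also have "(\<Sum>i<length w. of_bool (w ! i) / 2 ^ Suc (Suc i)) = wval w / 2"
    by (simp add: wval_def sum_divide_distrib)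
  finally show ?thesis by simp
qed

lemma wval_append: "wval (v @ w) = wval v + wval w / 2 ^ length v"
  by (induction v) (auto simp: wval_Cons field_simps)

lemma wval_replicate_False [simp]: "wval (replicate n False) = 0"
  by (induction n) (auto simp: wval_Cons)

lemma wval_nonneg: "0 \<le> wval w"
  by (induction w) (auto simp: wval_Cons)

lemma wval_le: "wval w \<le> 1 - 1 / 2 ^ length w"
proof (induction w)
  case (Cons b w)
  define e where "e = 1 / (2::real) ^ length w"
  have "0 < e" "wval w \<le> 1 - e" "1 / 2 ^ length (b # w) = e / (2::real)"
    using Cons by (simp_all add: e_def)
  then show ?case unfolding wval_Cons by (cases b) auto
qed simp

lemma wval_less_1: "wval w < 1"
  by (rule le_less_trans[OF wval_le]) simp

lemma wval_eq_nat_div: "\<exists>k::nat. wval w = real k / 2 ^ length w"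
proof (induction w)
  case (Cons b w)
  then obtain k where "wval w = real k / 2 ^ length w" by blast
  then show ?case
    by (intro exI[of _ "of_bool b * 2 ^ length w + k"]) (auto simp: wval_Cons field_simps)
qed simp

lemma wval_surj_nat_div: "k < 2 ^ n \<Longrightarrow> \<exists>w. length w = n \<and> wval w = real k / 2 ^ n"
proof (induction n arbitrary: k)
  case (Suc n)
  define b where "b = (2 ^ n \<le> k)"
  have "k - of_bool b * 2 ^ n < 2 ^ n" using Suc.prems by (auto simp: b_def)
  then obtain w where w: "length w = n" "wval w = real (k - of_bool b * 2 ^ n) / 2 ^ n"
    using Suc.IH by blast
  have "real k = of_bool b * 2 ^ n + real (k - of_bool b * 2 ^ n)"
    by (auto simp: b_def of_nat_diff)
  then show ?case
    by (intro exI[of _ "b # w"]) (auto simp: wval_Cons w field_simps)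
qed simp

lemma dyadic_eq_wval: "x \<in> dyadics - {1} \<Longrightarrow> \<exists>w. wval w = x"
proof -
  assume "x \<in> dyadics - {1}"
  then obtain k n where x: "x = real k / 2 ^ n" and "x < 1"
    by (auto simp: dyadics_def)
  then have "real k < 2 ^ n" by (simp add: divide_less_eq)
  then have "k < 2 ^ n" by (metis of_nat_less_iff of_nat_numeral of_nat_power)
  then show ?thesis using wval_surj_nat_div x by blast
qed

lemma wval_inj_same_length: "length v = length w \<Longrightarrow> wval v = wval w \<Longrightarrow> v = w"
proof (induction v arbitrary: w)
  case (Cons a v)
  then obtain b w' where w: "w = b # w'" by (cases w) auto
  have eq: "of_bool a + wval v = of_bool b + wval w'"
    using Cons.prems by (simp add: w wval_Cons)
  then have "a = b"
    using wval_less_1[of v] wval_less_1[of w'] wval_nonneg[of v] wval_nonneg[of w']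
    by (cases a; cases b) auto
  then show ?case using eq Cons by (simp add: w)
qed simp

lemma rho_list_Nil [simp]: "rho_list [] = []"
  by (simp add: rho_list_def)

lemma rho_list_Cons: "rho_list (b # w) = (if b then [False] else []) @ map Not (rho_list w)"
proof -
  have "[0..<length (b # w)] = 0 # map Suc [0..<length w]"
    by (simp add: map_Suc_upt upt_conv_Cons del: upt_Suc)
  then show ?thesis by (simp add: rho_list_def filter_map comp_def)
qed

lemma rho_list_append:
  "rho_list (v @ w) = rho_list v @ map ((\<noteq>) (odd (length v))) (rho_list w)"
  by (induction v) (auto simp: rho_list_Cons comp_def)

lemma rho_list_replicate_False [simp]: "rho_list (replicate n False) = []"
  by (induction n) (auto simp: rho_list_Cons)

lemma rho_list_append_replicate_False [simp]: "rho_list (w @ replicate n False) = rho_list w"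
  by (simp add: rho_list_append)

lemma rho_list_cong_wval: "wval v = wval w \<Longrightarrow> rho_list v = rho_list w"
proof -
  assume eq: "wval v = wval w"
  let ?pad = "\<lambda>u. u @ replicate (max (length v) (length w) - length u) False"
  have "?pad v = ?pad w"
    by (rule wval_inj_same_length) (auto simp: wval_append eq)
  then show ?thesis by (metis rho_list_append_replicate_False)
qed

lemma length_rho_list_prefix_unbounded:
  assumes "infinite {i. b i}"
  shows "\<exists>K. m \<le> length (rho_list (map b [0..<K]))"
proof -
  obtain A where A: "finite A" "card A = m" "A \<subseteq> {i. b i}"
    using infinite_arbitrarily_large[OF assms] by blast
  obtain K where K: "A \<subseteq> {..<K}" using finite_nat_bounded[OF A(1)] by blast
  let ?ones = "filter (\<lambda>i. map b [0..<K] ! i) [0..<K]"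
  have "A \<subseteq> set ?ones" using A K by (force simp: subset_eq)
  then have "m \<le> card (set ?ones)" using A by (metis card_mono finite_set)
  also have "\<dots> \<le> length ?ones" by (rule card_length)
  finally show ?thesis by (auto simp: rho_list_def)
qed

section \<open>Infinite binary sequences\<close>

definition prepend :: "bool list \<Rightarrow> (nat \<Rightarrow> bool) \<Rightarrow> nat \<Rightarrow> bool" where
  "prepend w c n = (if n < length w then w ! n else c (n - length w))"

abbreviation bit_term :: "(nat \<Rightarrow> bool) \<Rightarrow> nat \<Rightarrow> real" where
  "bit_term c n \<equiv> of_bool (c n) / 2 ^ Suc n"

lemma bit_term_le: "bit_term c n \<le> (1/2) ^ Suc n"
  by (simp add: power_divide)

lemma summable_bit_term: "summable (bit_term c)"
  by (rule summable_comparison_test'[where g="\<lambda>n. (1/2::real) ^ Suc n" and N=0])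
     (use power_half_series summable_def bit_term_le in auto)

lemma bval_sums: "bit_term c sums bval c"
  unfolding bval_def using summable_bit_term by (simp add: summable_sums)

lemma bval_nonneg: "0 \<le> bval c"
  unfolding bval_def by (rule suminf_nonneg[OF summable_bit_term]) simp

lemma bval_le_1: "bval c \<le> 1"
proof -
  have "bval c \<le> (\<Sum>n. (1/2::real) ^ Suc n)"
    unfolding bval_def
    by (rule suminf_le[OF bit_term_le summable_bit_term]) (use power_half_series summable_def in blast)
  then show ?thesis using power_half_series sums_unique by fastforce
qed

lemma bval_pos: "c i \<Longrightarrow> 0 < bval c"
  unfolding bval_def by (rule suminf_pos2[OF summable_bit_term, of _ i]) auto

lemma bval_False [simp]: "bval (\<lambda>_. False) = 0"
  by (simp add: bval_def)

lemma prepend_sums: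
  assumes "bit_term c sums v"
  shows "bit_term (prepend w c) sums (wval w + v / 2 ^ length w)"
proof -
  let ?N = "length w"
  have "(\<lambda>i. bit_term (prepend w c) (i + ?N)) = (\<lambda>i. bit_term c i / 2 ^ ?N)"
    by (auto simp: prepend_def power_add)
  then have "(\<lambda>i. bit_term (prepend w c) (i + ?N)) sums (v / 2 ^ ?N)"
    using sums_divide[OF assms] by simp
  then have "bit_term (prepend w c) sums (v / 2 ^ ?N + (\<Sum>i<?N. bit_term (prepend w c) i))"
    by (rule sums_iff_shift[THEN iffD1])
  moreover have "(\<Sum>i<?N. bit_term (prepend w c) i) = wval w"
    by (simp add: wval_def prepend_def)
  ultimately show ?thesis by (simp add: add.commute)
qed

lemma bval_prepend: "bval (prepend w c) = wval w + bval c / 2 ^ length w"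
  using prepend_sums[OF bval_sums] bval_sums sums_unique2 by blast

lemma bval_Not: "bval (\<lambda>n. \<not> c n) = 1 - bval c"
proof -
  have "(\<lambda>n. (1/2::real) ^ Suc n - bit_term c n) sums (1 - bval c)"
    by (rule sums_diff[OF power_half_series bval_sums])
  moreover have "(\<lambda>n. (1/2::real) ^ Suc n - bit_term c n) = bit_term (\<lambda>n. \<not> c n)"
    by (auto simp: power_divide)
  ultimately show ?thesis using bval_sums sums_unique2 by metis
qed

lemma prepend_prefix_suffix: "prepend (map b [0..<n]) (\<lambda>i. b (i + n)) = b"
  by (auto simp: prepend_def fun_eq_iff)

lemma expansion_split:
  assumes inf: "infinite {i. b i}" and b: "bit_term b sums x"
  shows "\<exists>s. 0 < s \<and> s \<le> 1 \<and> x = wval (map b [0..<n]) + s / 2 ^ n"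
proof (intro exI conjI)
  have "bit_term b sums (wval (map b [0..<n]) + bval (\<lambda>i. b (i + n)) / 2 ^ n)"
    using prepend_sums[OF bval_sums, of "map b [0..<n]" "\<lambda>i. b (i + n)"]
    unfolding prepend_prefix_suffix by simp
  then show "x = wval (map b [0..<n]) + bval (\<lambda>i. b (i + n)) / 2 ^ n"
    using b sums_unique2 by blast
  obtain m where "m \<ge> n" "b m" using inf unfolding infinite_nat_iff_unbounded_le by auto
  then show "0 < bval (\<lambda>i. b (i + n))" by (intro bval_pos[of _ "m - n"]) simp
qed (rule bval_le_1)

lemma expansion_partial_sums:
  assumes "infinite {i. b i}" "bit_term b sums x"
  shows "(\<Sum>i<n. bit_term b i) = (of_int \<lceil>2 ^ n * x\<rceil> - 1) / 2 ^ n"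
proof -
  obtain s where s: "0 < s" "s \<le> 1" "x = wval (map b [0..<n]) + s / 2 ^ n"
    using expansion_split[OF assms] by blast
  obtain k :: nat where k: "wval (map b [0..<n]) = real k / 2 ^ n"
    using wval_eq_nat_div[of "map b [0..<n]"] by auto
  have "2 ^ n * x = real k + s" using s(3) k by (simp add: field_simps)
  then have "\<lceil>2 ^ n * x\<rceil> = int k + 1" using s by (intro ceiling_unique) auto
  then show ?thesis using k by (simp add: wval_def)
qed

lemma expansion_unique:
  assumes "infinite {i. b i}" "bit_term b sums x" "infinite {i. b' i}" "bit_term b' sums x"
  shows "b = b'"
proof
  fix n
  have "bit_term b n = (\<Sum>i<Suc n. bit_term b i) - (\<Sum>i<n. bit_term b i)" by simp
  also have "\<dots> = (\<Sum>i<Suc n. bit_term b' i) - (\<Sum>i<n. bit_term b' i)"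
    using expansion_partial_sums[OF assms(1,2)] expansion_partial_sums[OF assms(3,4)] by simp
  also have "\<dots> = bit_term b' n" by simp
  finally show "b n = b' n" by (cases "b n"; cases "b' n") auto
qed

section \<open>The expansion \<open>beta\<close>\<close>

text \<open>\<open>(\<lceil>2^n x\<rceil> - 1) / 2^n\<close> is the largest multiple of \<open>2^-n\<close> strictly below \<open>x\<close>; its last
  binary digit is the \<open>n\<close>-th digit of the expansion of \<open>x\<close> with infinitely many ones.\<close>

definition ceiling_digits :: "real \<Rightarrow> nat \<Rightarrow> bool" where
  "ceiling_digits x n = odd (\<lceil>2 ^ Suc n * x\<rceil> - 1)"

lemma ceiling_double:
  fixes y :: real
  shows "\<lceil>2 * y\<rceil> - 1 = 2 * (\<lceil>y\<rceil> - 1) + of_bool (odd (\<lceil>2 * y\<rceil> - 1))"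
proof -
  have "\<lceil>2 * y\<rceil> \<le> 2 * \<lceil>y\<rceil>" by (simp add: ceiling_le_iff)
  moreover have "2 * real_of_int \<lceil>y\<rceil> - 2 < of_int \<lceil>2 * y\<rceil>"
    using ceiling_correct[of y] le_of_int_ceiling[of "2 * y"] by linarith
  then have "real_of_int (2 * \<lceil>y\<rceil> - 2) < of_int \<lceil>2 * y\<rceil>" by simp
  then have "2 * \<lceil>y\<rceil> - 2 < \<lceil>2 * y\<rceil>" by (simp only: of_int_less_iff)
  ultimately have "\<lceil>2 * y\<rceil> = 2 * \<lceil>y\<rceil> \<or> \<lceil>2 * y\<rceil> = 2 * \<lceil>y\<rceil> - 1" by linarith
  then show ?thesis by auto
qed

lemma ceiling_digits_partial_sums:
  assumes "0 < x" "x \<le> 1"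
  shows "(\<Sum>i<n. bit_term (ceiling_digits x) i) = (of_int \<lceil>2 ^ n * x\<rceil> - 1) / 2 ^ n"
proof (induction n)
  case 0
  have "\<lceil>x\<rceil> = 1" using assms by (intro ceiling_unique) auto
  then show ?case by simp
next
  case (Suc n)
  define y where "y = 2 ^ n * x"
  have digit: "ceiling_digits x n = odd (\<lceil>2 * y\<rceil> - 1)"
    by (simp add: ceiling_digits_def y_def mult.assoc)
  have "real_of_int (\<lceil>2 * y\<rceil> - 1) = 2 * (of_int \<lceil>y\<rceil> - 1) + of_bool (odd (\<lceil>2 * y\<rceil> - 1))"
    by (subst ceiling_double) simp
  then show ?case using Suc digit by (simp add: y_def mult.assoc field_simps)
qed

lemma ceiling_digits_partial_sums_bounds:
  assumes "0 < x" "x \<le> 1"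
  shows "(\<Sum>i<n. bit_term (ceiling_digits x) i) < x"
    and "x \<le> (\<Sum>i<n. bit_term (ceiling_digits x) i) + (1/2) ^ n"
  using ceiling_correct[of "2 ^ n * x"]
  unfolding ceiling_digits_partial_sums[OF assms] by (auto simp: field_simps power_divide)

lemma ceiling_digits_sums:
  assumes "0 < x" "x \<le> 1"
  shows "bit_term (ceiling_digits x) sums x"
  unfolding sums_def
proof (rule tendsto_sandwich[where f="\<lambda>n. x - (1/2)^n" and h="\<lambda>n. x"])
  show "\<forall>\<^sub>F n in sequentially. x - (1/2)^n \<le> (\<Sum>i<n. bit_term (ceiling_digits x) i)"
    using ceiling_digits_partial_sums_bounds(2)[OF assms] by (simp add: algebra_simps)
  show "\<forall>\<^sub>F n in sequentially. (\<Sum>i<n. bit_term (ceiling_digits x) i) \<le> x"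
    using ceiling_digits_partial_sums_bounds(1)[OF assms] by (simp add: less_imp_le)
  have "(\<lambda>n. x - (1/2::real)^n) \<longlonglongrightarrow> x - 0"
    by (intro tendsto_diff tendsto_const LIMSEQ_realpow_zero) auto
  then show "(\<lambda>n. x - (1/2::real)^n) \<longlonglongrightarrow> x" by simp
qed simp

lemma ceiling_digits_infinite:
  assumes "0 < x" "x \<le> 1"
  shows "infinite {i. ceiling_digits x i}"
proof
  assume "finite {i. ceiling_digits x i}"
  then obtain m where m: "{i. ceiling_digits x i} \<subseteq> {..<m}" using finite_nat_bounded by blast
  let ?P = "\<lambda>n. (\<Sum>i<n. bit_term (ceiling_digits x) i)"
  have const: "?P n = ?P m" if "n \<ge> m" for n
    using that
  proof (induction n rule: dec_induct)
    case (step n)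
    then show ?case using m by auto
  qed simp
  have gap: "0 < x - ?P m" using ceiling_digits_partial_sums_bounds(1)[OF assms] by simp
  obtain n where n: "(1/2::real) ^ n < x - ?P m" using real_arch_pow_inv[OF gap, of "1/2"] by auto
  have "(1/2::real) ^ max n m \<le> (1/2) ^ n" by (rule power_decreasing) auto
  moreover have "x \<le> ?P m + (1/2) ^ max n m"
    using ceiling_digits_partial_sums_bounds(2)[OF assms, of "max n m"] const[of "max n m"] by simp
  ultimately show False using n by linarith
qed

lemma beta_eqI:
  assumes "infinite {i. b i}" "bit_term b sums x"
  shows "beta x = b"
  unfolding beta_def using expansion_unique[OF _ _ assms] assms by blast

lemma beta_eq_ceiling_digits: "0 < x \<Longrightarrow> x \<le> 1 \<Longrightarrow> beta x = ceiling_digits x"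
  by (intro beta_eqI ceiling_digits_infinite ceiling_digits_sums)

lemma
  assumes "0 < x" "x \<le> 1"
  shows infinite_beta: "infinite {i. beta x i}"
    and beta_sums: "bit_term (beta x) sums x"
  using beta_eq_ceiling_digits ceiling_digits_infinite ceiling_digits_sums assms by simp_all

lemma beta_prefix_bounds:
  assumes "0 < x" "x \<le> 1"
  shows "wval (map (beta x) [0..<K]) < x" "x \<le> wval (map (beta x) [0..<K]) + 1 / 2 ^ K"
proof -
  obtain s where s: "0 < s" "s \<le> 1" "x = wval (map (beta x) [0..<K]) + s / 2 ^ K"
    using expansion_split[OF infinite_beta[OF assms] beta_sums[OF assms]] by blast
  moreover have "0 < s / 2 ^ K" "s / 2 ^ K \<le> 1 / 2 ^ K"
    using s(1,2) divide_right_mono[of s 1 "2 ^ K"] by simp_all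
  ultimately show "wval (map (beta x) [0..<K]) < x" "x \<le> wval (map (beta x) [0..<K]) + 1 / 2 ^ K"
    by linarith+
qed

section \<open>The map \<open>rho\<close> on infinite sequences\<close>

lemma strict_mono_eq_if_range_eq:
  fixes g h :: "nat \<Rightarrow> nat"
  assumes g: "strict_mono g" and h: "strict_mono h" and range: "range g = range h"
  shows "g = h"
proof
  fix n show "g n = h n"
  proof (induction n rule: less_induct)
    case (less n)
    obtain k j where k: "g n = h k" and j: "h n = g j" using range by (metis rangeE rangeI)
    consider "k < n" | "k = n" | "n < k" by linarith
    then show ?case
    proof cases
      case 1
      then have "g n = g k" using k less.IH by simp
      then show ?thesis using 1 strict_mono_eq[OF g] by simp
    next
      case 3
      then have "h n < h k" using strict_mono_less[OF h] by simp
      then have "g j < g n" using j k by simp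
      then have "j < n" using strict_mono_less[OF g] by blast
      then show ?thesis using j less.IH strict_mono_eq[OF h] by auto
    qed (use k in simp)
  qed
qed

lemma enumerate_range_strict_mono:
  fixes g :: "nat \<Rightarrow> nat"
  assumes "strict_mono g"
  shows "enumerate (range g) = g"
proof -
  have "infinite (range g)"
    using assms range_inj_infinite strict_mono_imp_inj_on by blast
  then show ?thesis
    using strict_mono_eq_if_range_eq[OF strict_mono_enumerate assms] range_enumerate by blast
qed

lemma enumerate_list_Un_shift:
  fixes xs :: "nat list"
  assumes xs: "sorted_wrt (<) xs" "\<forall>i\<in>set xs. i < N" and B: "infinite B"
  shows "enumerate (set xs \<union> (+) N ` B) n
    = (if n < length xs then xs ! n else N + enumerate B (n - length xs))"
proof -
  define g where "g n = (if n < length xs then xs ! n else N + enumerate B (n - length xs))" for n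
  have "strict_mono g"
    unfolding strict_mono_Suc_iff
  proof
    fix n
    consider "Suc n < length xs" | "Suc n = length xs" | "length xs \<le> n" by linarith
    then show "g n < g (Suc n)"
    proof cases
      case 1
      then show ?thesis using sorted_wrt_nth_less[OF xs(1), of n "Suc n"] by (simp add: g_def)
    next
      case 2
      then have "xs ! n < N" using xs(2) nth_mem[of n xs] by simp
      then show ?thesis using 2 by (simp add: g_def)
    next
      case 3
      then show ?thesis using enumerate_step[OF B] by (simp add: g_def Suc_diff_le)
    qed
  qed
  moreover have "range g = set xs \<union> (+) N ` B"
  proof -
    have "{..<length xs} \<union> {length xs..} = UNIV" by auto
    then have "range g = g ` {..<length xs} \<union> g ` {length xs..}" by (metis image_Un)
    also have "g ` {..<length xs} = set xs" by (auto simp: g_def in_set_conv_nth image_iff)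
    also have "g ` {length xs..} = (\<lambda>m. N + enumerate B m) ` UNIV"
      by (auto simp: g_def image_iff intro!: bexI[of _ "_ + length xs"])
    also have "\<dots> = (+) N ` B"
      using range_enumerate[OF B] by (metis image_image)
    finally show ?thesis .
  qed
  ultimately show ?thesis using enumerate_range_strict_mono g_def by metis
qed

lemma rho_inf_strict_mono:
  fixes g :: "nat \<Rightarrow> nat"
  assumes "strict_mono g" "range g = {i. b i}"
  shows "rho_inf b = (\<lambda>n. odd (g n))"
  unfolding rho_inf_def assms(2)[symmetric] enumerate_range_strict_mono[OF assms(1)] ..

lemma rho_inf_prepend:
  assumes "infinite {i. b i}"
  shows "rho_inf (prepend w b) = prepend (rho_list w) (\<lambda>n. odd (length w) \<noteq> rho_inf b n)"
proof -
  define xs where "xs = filter (\<lambda>i. w ! i) [0..<length w]"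
  have ones: "{i. prepend w b i} = set xs \<union> (+) (length w) ` {i. b i}"
    by (auto simp: prepend_def xs_def image_iff) (metis le_add_diff_inverse not_less)+
  have "sorted_wrt (<) xs" unfolding xs_def by (rule sorted_wrt_filter) simp
  moreover have "\<forall>i\<in>set xs. i < length w" by (simp add: xs_def)
  moreover have "rho_list w = map odd xs" by (simp add: rho_list_def xs_def)
  ultimately show ?thesis
    unfolding rho_inf_def ones
    by (auto simp: fun_eq_iff prepend_def enumerate_list_Un_shift[OF _ _ assms])
qed

section \<open>The function \<open>R\<close>\<close>

lemma R_pos: "0 < x \<Longrightarrow> R x = bval (rho_inf (beta x))"
  by (simp add: R_def)

lemma R_nonneg: "0 \<le> R x"
  by (simp add: R_def bval_nonneg)

lemma R_le_1: "R x \<le> 1"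
  by (simp add: R_def bval_le_1)

lemma R_self_similar:
  assumes s: "0 < s" "s \<le> 1"
  shows "R (wval w + s / 2 ^ length w)
    = wval (rho_list w) + (if odd (length w) then 1 - R s else R s) / 2 ^ length (rho_list w)"
proof -
  define t where "t = wval w + s / 2 ^ length w"
  have inf: "infinite {i. beta s i}" using infinite_beta[OF s] .
  have "(+) (length w) ` {i. beta s i} \<subseteq> {i. prepend w (beta s) i}"
    by (auto simp: prepend_def)
  then have "infinite {i. prepend w (beta s) i}"
    using inf finite_imageD finite_subset inj_on_def by (metis (no_types, lifting) add_left_cancel)
  moreover have "bit_term (prepend w (beta s)) sums t"
    unfolding t_def by (rule prepend_sums[OF beta_sums[OF s]])
  ultimately have "beta t = prepend w (beta s)" by (rule beta_eqI)
  moreover have "0 < t" unfolding t_def using s wval_nonneg[of w] by (simp add: add_nonneg_pos)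
  ultimately have "R t = bval (rho_inf (prepend w (beta s)))" using R_pos by simp
  also have "\<dots> = wval (rho_list w) + (if odd (length w) then 1 - R s else R s) / 2 ^ length (rho_list w)"
    by (simp add: rho_inf_prepend[OF inf] bval_prepend bval_Not R_pos[OF s(1)])
  finally show ?thesis unfolding t_def .
qed

text \<open>Every \<open>c\<close> is \<open>rho\<close> of the sequence with ones exactly at the positions \<open>2k + [c k]\<close>.\<close>

lemma R_surj:
  assumes "0 \<le> z" "z \<le> 1"
  shows "\<exists>s. 0 < s \<and> s \<le> 1 \<and> R s = z"
proof -
  obtain c where c: "bval c = z"
  proof (cases "z = 0")
    case False
    then have "bval (beta z) = z"
      using assms beta_sums[of z] bval_sums sums_unique2 by force
    then show ?thesis using that by blast
  qed (use that bval_False in blast)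
  define g where "g k = 2 * k + of_bool (c k)" for k :: nat
  have g: "strict_mono g" unfolding strict_mono_Suc_iff g_def by auto
  define b where "b i = (i \<in> range g)" for i
  have ones: "range g = {i. b i}" by (auto simp: b_def)
  have "infinite {i. b i}" using ones g range_inj_infinite strict_mono_imp_inj_on by metis
  then have beta_b: "beta (bval b) = b" by (rule beta_eqI[OF _ bval_sums])
  have pos: "0 < bval b" by (rule bval_pos[of b "g 0"]) (simp add: b_def)
  have "rho_inf b = c" using rho_inf_strict_mono[OF g ones] by (auto simp: g_def fun_eq_iff)
  then have "R (bval b) = z" using R_pos[OF pos] beta_b c by simp
  then show ?thesis using pos bval_le_1 by blast
qed

lemma R_1: "R 1 = 1 / 3"
proof -
  have "bit_term (\<lambda>_. True) = (\<lambda>n. (1/2::real) ^ Suc n)" by (simp add: fun_eq_iff power_divide)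
  then have "beta 1 = (\<lambda>_. True)" using power_half_series by (intro beta_eqI) auto
  moreover have "rho_inf (\<lambda>_. True) = (\<lambda>n. odd (id n))"
    by (rule rho_inf_strict_mono) (auto simp: strict_mono_def)
  ultimately have R1: "R 1 = bval odd" using R_pos[of 1] by simp
  have odd_prepend: "odd = prepend [False] (\<lambda>n. \<not> odd n)"
    by (auto simp: fun_eq_iff prepend_def)
  have "bval odd = (1 - bval odd) / 2"
    by (subst odd_prepend) (simp add: bval_prepend bval_Not wval_Cons)
  then show ?thesis using R1 by simp
qed

section \<open>Behaviour of \<open>R\<close> to the right of dyadic points\<close>

definition rho_interval :: "bool list \<Rightarrow> real set" where
  "rho_interval w = {wval (rho_list w) .. wval (rho_list w) + 1 / 2 ^ length (rho_list w)}"

lemma Iint_wval: "Iint (wval w) = rho_interval w"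
proof -
  have "wval (SOME v. wval v = wval w) = wval w" by (rule someI) (rule refl)
  then have "rho_list (SOME v. wval v = wval w) = rho_list w" by (rule rho_list_cong_wval)
  then show ?thesis by (simp add: Iint_def rho_interval_def Let_def)
qed

lemma rho_interval_append_replicate_False:
  "rho_interval (w @ replicate n False) = rho_interval w"
  by (simp add: rho_interval_def)

lemma closed_rho_interval: "closed (rho_interval w)"
  by (simp add: rho_interval_def)

lemma R_in_rho_interval:
  assumes "wval w < t" "t \<le> wval w + 1 / 2 ^ length w"
  shows "R t \<in> rho_interval w"
proof -
  define s where "s = (t - wval w) * 2 ^ length w"
  have s: "0 < s" "s \<le> 1" using assms by (auto simp: s_def field_simps)
  have "t = wval w + s / 2 ^ length w" by (simp add: s_def)
  then have "R t = wval (rho_list w)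
      + (if odd (length w) then 1 - R s else R s) / 2 ^ length (rho_list w)"
    using R_self_similar[OF s] by simp
  moreover have "0 \<le> (if odd (length w) then 1 - R s else R s)"
    "(if odd (length w) then 1 - R s else R s) \<le> 1"
    using R_nonneg[of s] R_le_1[of s] by auto
  ultimately show ?thesis by (auto simp: rho_interval_def divide_right_mono)
qed

lemma R_attains_rho_interval:
  assumes "y \<in> rho_interval w"
  shows "\<exists>t. wval w < t \<and> t \<le> wval w + 1 / 2 ^ length w \<and> R t = y"
proof -
  define P :: real where "P = 2 ^ length (rho_list w)"
  define z where "z = (y - wval (rho_list w)) * P"
  have "0 \<le> z" "z \<le> 1" using assms by (auto simp: rho_interval_def z_def P_def field_simps)
  then have "0 \<le> (if odd (length w) then 1 - z else z)" "(if odd (length w) then 1 - z else z) \<le> 1"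
    by auto
  then obtain s where s: "0 < s" "s \<le> 1" "R s = (if odd (length w) then 1 - z else z)"
    using R_surj by blast
  have "R (wval w + s / 2 ^ length w) = wval (rho_list w) + z / P"
    using R_self_similar[OF s(1,2)] s(3) by (simp add: P_def)
  also have "\<dots> = y" by (simp add: z_def P_def)
  finally show ?thesis
    using s divide_right_mono[of s 1 "2 ^ length w"] by (intro exI[of _ "wval w + s / 2 ^ length w"]) auto
qed

lemma Iint_near_right:
  assumes "x \<in> dyadics - {1}"
  obtains d where "x < d" "\<And>t. x < t \<Longrightarrow> t < d \<Longrightarrow> R t \<in> Iint x"
proof -
  obtain w where w: "wval w = x" using dyadic_eq_wval[OF assms(1)] by blast
  show ?thesis
    by (rule that[of "x + 1 / 2 ^ length w"]) (use w R_in_rho_interval Iint_wval in auto)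
qed

lemma R_attains_Iint_near_right:
  assumes "x \<in> dyadics - {1}" "y \<in> Iint x" "x < d"
  shows "\<exists>t. x < t \<and> t < d \<and> R t = y"
proof -
  obtain w where w: "wval w = x" using dyadic_eq_wval[OF assms(1)] by blast
  obtain M where M: "(1/2::real) ^ M < d - x" using real_arch_pow_inv[of "d - x" "1/2"] assms by auto
  define v where "v = w @ replicate M False"
  have v: "wval v = x" "y \<in> rho_interval v"
    using assms w Iint_wval[of w] by (simp_all add: v_def wval_append rho_interval_append_replicate_False)
  obtain t where t: "x < t" "t \<le> x + 1 / 2 ^ length v" "R t = y"
    using R_attains_rho_interval[OF v(2)] unfolding v(1) by blast
  moreover have "1 / 2 ^ length v \<le> (1/2::real) ^ M"
    by (simp add: v_def power_add power_divide field_simps)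
  ultimately show ?thesis using M by (intro exI[of _ t]) auto
qed

lemma eventually_R_in_Iint_at_right:
  assumes "x \<in> dyadics - {1}"
  shows "\<forall>\<^sub>F t in at_right x. R t \<in> Iint x"
  using Iint_near_right[OF assms] unfolding eventually_at_right_field by metis

lemma frequently_R_eq_at_right:
  assumes "x \<in> dyadics - {1}" "y \<in> Iint x"
  shows "\<exists>\<^sub>F t in at_right x. R t = y"
  unfolding frequently_def eventually_at_right_field
  using R_attains_Iint_near_right[OF assms] by blast

lemma Liminf_le_if_frequently:
  fixes X :: "_ \<Rightarrow> _ :: complete_linorder"
  assumes "\<exists>\<^sub>F t in F. X t \<le> C"
  shows "Liminf F X \<le> C"
proof (rule ccontr)
  assume "\<not> Liminf F X \<le> C"
  then have "\<forall>\<^sub>F t in F. C < X t" by (intro less_LiminfD) auto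
  then show False using assms by (simp add: frequently_def eventually_mono not_le)
qed

lemma Limsup_ge_if_frequently:
  fixes X :: "_ \<Rightarrow> _ :: complete_linorder"
  assumes "\<exists>\<^sub>F t in F. C \<le> X t"
  shows "C \<le> Limsup F X"
proof (rule ccontr)
  assume "\<not> C \<le> Limsup F X"
  then have "\<forall>\<^sub>F t in F. X t < C" by (intro Limsup_lessD) auto
  then show False using assms by (simp add: frequently_def eventually_mono not_le)
qed

lemma Liminf_Limsup_R_at_right:
  assumes "x \<in> dyadics - {1}"
  shows "\<exists>a b. Liminf (at_right x) (\<lambda>t. ereal (R t)) = ereal a
    \<and> Limsup (at_right x) (\<lambda>t. ereal (R t)) = ereal b \<and> Iint x = {a..b}"
proof -
  obtain w where "wval w = x" using dyadic_eq_wval[OF assms] by blast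
  then obtain a b where I: "Iint x = {a..b}" and ab: "a \<le> b"
    using Iint_wval[of w] by (auto simp: rho_interval_def)
  have ev: "\<forall>\<^sub>F t in at_right x. a \<le> R t \<and> R t \<le> b"
    using eventually_R_in_Iint_at_right[OF assms] I by simp
  have "\<exists>\<^sub>F t in at_right x. ereal (R t) \<le> ereal a"
    using frequently_R_eq_at_right[OF assms, of a] I ab by (auto elim: frequently_elim1)
  then have "Liminf (at_right x) (\<lambda>t. ereal (R t)) = ereal a"
    using ev by (intro order.antisym Liminf_le_if_frequently Liminf_bounded) (auto elim: eventually_mono)
  moreover have "\<exists>\<^sub>F t in at_right x. ereal b \<le> ereal (R t)"
    using frequently_R_eq_at_right[OF assms, of b] I ab by (auto elim: frequently_elim1)
  then have "Limsup (at_right x) (\<lambda>t. ereal (R t)) = ereal b"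
    using ev by (intro order.antisym Limsup_ge_if_frequently Limsup_bounded) (auto elim: eventually_mono)
  ultimately show ?thesis using I by blast
qed

text \<open>If \<open>x = 0.v1\<close> then \<open>I\<^sub>x\<close> is the lower or upper half of \<open>rho_interval v\<close>, according to the
  parity of \<open>|v|\<close>, while \<open>x = 0.v0111\<dots>\<close> and \<open>R 1 = 1/3\<close> put \<open>R x\<close> at \<open>2/3\<close> resp. \<open>1/3\<close> of \<open>rho_interval v\<close>.\<close>

lemma R_notin_Iint:
  assumes x: "x \<in> dyadics - {0, 1}"
  shows "R x \<notin> Iint x"
proof -
  obtain w where w: "wval w = x" using dyadic_eq_wval x by blast
  have "True \<in> set w"
  proof (rule ccontr)
    assume "True \<notin> set w"
    then have "w = replicate (length w) False" by (metis (full_types) replicate_length_same)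
    then show False using w x by (metis wval_replicate_False DiffD2 insertCI)
  qed
  then obtain v zs where "w = v @ True # zs" "True \<notin> set zs" using split_list_last by metis
  then have "w = (v @ [True]) @ replicate (length zs) False"
    by (metis (full_types) append.assoc append_Cons append_Nil replicate_length_same)
  then have x1: "wval (v @ [True]) = x"
    using w by (metis wval_append wval_replicate_False div_0 add_0_right)
  define A where "A = wval (rho_list v)"
  define P :: real where "P = 2 ^ length (rho_list v)"
  define q :: real where "q = of_bool (odd (length v))"
  have "P > 0" by (simp add: P_def)
  have I: "Iint x = {A + q / (2 * P) .. A + q / (2 * P) + 1 / (2 * P)}"
    unfolding x1[symmetric] Iint_wval
    by (simp add: rho_interval_def rho_list_append rho_list_Cons wval_append wval_Cons A_def P_def q_def)
  have "x = wval (v @ [False]) + 1 / 2 ^ length (v @ [False])"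
    using x1 by (simp add: wval_append wval_Cons)
  then have "R x = A + (if odd (length v) then 1/3 else 2/3) / P"
    using R_self_similar[of 1 "v @ [False]"]
    by (simp add: R_1 A_def P_def rho_list_append rho_list_Cons)
  then show ?thesis unfolding I q_def using \<open>P > 0\<close> by (auto simp: field_simps)
qed

section \<open>The closure of the graph\<close>

lemma closure_graph_value_in_closed:
  fixes f :: "'a::metric_space \<Rightarrow> 'b::metric_space"
  assumes xy: "(x, y) \<in> closure {(t, f t) | t. t \<in> S}" and "0 < d" and C: "closed C"
    and near: "\<And>t. t \<in> S \<Longrightarrow> dist t x < d \<Longrightarrow> f t \<in> C"
  shows "y \<in> C"
proof (rule ccontr)
  assume "y \<notin> C"
  then obtain e where e: "0 < e" "\<And>z. dist z y < e \<Longrightarrow> z \<notin> C"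
    using C unfolding closed_def open_dist by (metis ComplD ComplI dist_commute)
  have "0 < min d e" using \<open>0 < d\<close> e(1) by simp
  then obtain q where "q \<in> {(t, f t) | t. t \<in> S}" "dist q (x, y) < min d e"
    using xy unfolding closure_approachable by blast
  then obtain t where t: "t \<in> S" "dist (t, f t) (x, y) < min d e" by blast
  then have "f t \<in> C" using near dist_fst_le[of "(t, f t)" "(x, y)"] by fastforce
  moreover have "dist (f t) y < e" using t dist_snd_le[of "(t, f t)" "(x, y)"] by simp
  ultimately show False using e by blast
qed

lemma eq_if_mem_rho_interval_prefixes:
  assumes "infinite {i. b i}"
    and "\<And>K. y \<in> rho_interval (map b [0..<K])" "\<And>K. z \<in> rho_interval (map b [0..<K])"
  shows "y = z"
proof (rule ccontr)
  assume "y \<noteq> z"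
  then obtain m where m: "(1/2::real) ^ m < \<bar>y - z\<bar>" using real_arch_pow_inv[of "\<bar>y - z\<bar>" "1/2"] by auto
  obtain K where K: "m \<le> length (rho_list (map b [0..<K]))"
    using length_rho_list_prefix_unbounded[OF assms(1)] by blast
  have "\<bar>y - z\<bar> \<le> 1 / 2 ^ length (rho_list (map b [0..<K]))"
    using assms(2,3)[of K] by (auto simp: rho_interval_def abs_le_iff)
  also have "\<dots> \<le> (1/2) ^ m" using power_decreasing[OF K, of "1/2::real"] by (simp add: power_divide)
  finally show False using m by simp
qed

text \<open>Left of \<open>x\<close> the graph stays in the cylinder of the prefix; right of \<open>x\<close> it can leave it
  only if \<open>x\<close> is the right end of the cylinder, and then \<open>x\<close> is dyadic.\<close>

lemma R_near_in_prefix_interval: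
  fixes K :: nat
  assumes "0 < x" "x \<le> 1"
  defines "w \<equiv> map (beta x) [0..<K]"
  obtains d where "0 < d"
    "\<And>t. t \<in> {0..1} \<Longrightarrow> dist t x < d
      \<Longrightarrow> R t \<in> rho_interval w \<union> (if x \<in> dyadics - {1} then Iint x else {})"
proof -
  let ?E = "if x \<in> dyadics - {1} then Iint x else {}"
  define hi where "hi = wval w + 1 / 2 ^ K"
  have lo: "wval w < x" and "x \<le> hi"
    using beta_prefix_bounds[OF assms(1,2)] unfolding w_def hi_def by blast+
  have left: "R t \<in> rho_interval w" if "wval w < t" "t \<le> hi" for t
    using R_in_rho_interval that by (simp add: hi_def w_def)
  obtain d2 where d2: "x < d2" "\<And>t. x < t \<Longrightarrow> t < d2 \<Longrightarrow> t \<le> 1 \<Longrightarrow> R t \<in> rho_interval w \<union> ?E"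
  proof (cases "x < hi")
    case True
    then show ?thesis using left lo by (intro that[of hi]) auto
  next
    case False
    with \<open>x \<le> hi\<close> have x_hi: "x = hi" by simp
    show ?thesis
    proof (cases "x = 1")
      case False
      obtain k :: nat where "wval w = real k / 2 ^ K" using wval_eq_nat_div[of w] by (auto simp: w_def)
      then have "x = real (k + 1) / 2 ^ K" using x_hi by (simp add: hi_def add_divide_distrib)
      then have "x \<in> dyadics" using assms less_imp_le unfolding dyadics_def by blast
      with False have x: "x \<in> dyadics - {1}" by simp
      obtain d where "x < d" "\<And>t. x < t \<Longrightarrow> t < d \<Longrightarrow> R t \<in> Iint x"
        using Iint_near_right[OF x] by blast
      then show ?thesis using x by (intro that[of d]) auto
    qed (intro that[of 2], auto)
  qed
  show ?thesis
  proof (rule that[of "min (x - wval w) (d2 - x)"])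
    show "0 < min (x - wval w) (d2 - x)" using lo d2(1) by simp
    fix t assume t: "t \<in> {0..1}" "dist t x < min (x - wval w) (d2 - x)"
    show "R t \<in> rho_interval w \<union> ?E"
    proof (cases "t \<le> x")
      case True
      then show ?thesis using t left \<open>x \<le> hi\<close> by (auto simp: dist_real_def)
    next
      case False
      then show ?thesis using t d2(2) by (auto simp: dist_real_def)
    qed
  qed
qed

lemma closure_graph_R_subset_square: "closure {(x, R x) | x. x \<in> {0..1}} \<subseteq> {0..1} \<times> {0..1}"
proof (rule closure_minimal)
  show "{(x, R x) | x. x \<in> {0..1}} \<subseteq> {0..1} \<times> {0..1}" using R_nonneg R_le_1 by auto
qed (simp add: closed_Times)

lemma closure_graph_R_eq_R:
  assumes xy: "(x, y) \<in> closure {(x, R x) | x. x \<in> {0..1}}" and x: "0 < x" "x \<le> 1"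
    and not_I: "x \<in> dyadics - {1} \<Longrightarrow> y \<notin> Iint x"
  shows "y = R x"
proof -
  let ?E = "if x \<in> dyadics - {1} then Iint x else {}"
  have "y \<in> rho_interval (map (beta x) [0..<K])" for K
  proof -
    obtain d where "0 < d" "\<And>t. t \<in> {0..1} \<Longrightarrow> dist t x < d
        \<Longrightarrow> R t \<in> rho_interval (map (beta x) [0..<K]) \<union> ?E"
      using R_near_in_prefix_interval[OF x] by blast
    moreover have "closed (rho_interval (map (beta x) [0..<K]) \<union> ?E)"
      by (simp add: closed_rho_interval closed_Un Iint_def Let_def)
    ultimately have "y \<in> rho_interval (map (beta x) [0..<K]) \<union> ?E"
      using closure_graph_value_in_closed[OF xy] by blast
    then show ?thesis using not_I by (auto split: if_splits)
  qed
  moreover have "R x \<in> rho_interval (map (beta x) [0..<K])" for K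
    using beta_prefix_bounds[OF x] by (intro R_in_rho_interval) simp_all
  ultimately show "y = R x"
    using eq_if_mem_rho_interval_prefixes[OF infinite_beta[OF x]] by blast
qed

lemma closure_graph_R_subset:
  "closure {(x, R x) | x. x \<in> {0..1}}
    \<subseteq> {(x, R x) | x. x \<in> {0..1}} \<union> (\<Union>x\<in>dyadics - {1}. {x} \<times> Iint x)"
proof (rule subsetI)
  fix p assume "p \<in> closure {(x, R x) | x. x \<in> {0..1}}"
  moreover obtain x y where p: "p = (x, y)" by (cases p)
  ultimately have xy: "(x, y) \<in> closure {(x, R x) | x. x \<in> {0..1}}" by simp
  have "(x, y) \<in> {0..1} \<times> {0..1}" using subsetD[OF closure_graph_R_subset_square xy] .
  then have x: "0 \<le> x" "x \<le> 1" and y: "y \<in> {0..1}" by auto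
  show "p \<in> {(x, R x) | x. x \<in> {0..1}} \<union> (\<Union>x\<in>dyadics - {1}. {x} \<times> Iint x)"
  proof (cases "x \<in> dyadics - {1} \<and> y \<in> Iint x")
    case not_I: False
    have "x \<noteq> 0"
    proof
      assume "x = 0"
      moreover have "0 \<in> dyadics" by (auto simp: dyadics_def intro!: exI[of _ 0])
      moreover have "Iint 0 = {0..1}" using Iint_wval[of "[]"] by (simp add: rho_interval_def)
      ultimately show False using y not_I by simp
    qed
    with x have "y = R x" by (intro closure_graph_R_eq_R[OF xy]) (use not_I in auto)
    then show ?thesis using p x by auto
  next
    case True
    then show ?thesis using p by auto
  qed
qed

lemma Iint_subset_closure_graph_R:
  assumes x: "x \<in> dyadics - {1}" and y: "y \<in> Iint x"
  shows "(x, y) \<in> closure {(x, R x) | x. x \<in> {0..1}}"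
  unfolding closure_approachable
proof (intro allI impI)
  fix e :: real assume "0 < e"
  have "0 \<le> x" "x < 1" using x by (auto simp: dyadics_def)
  then obtain t where t: "x < t" "t < min (x + e) 1" "R t = y"
    using R_attains_Iint_near_right[OF x y, of "min (x + e) 1"] \<open>0 < e\<close> by auto
  then have "(t, R t) \<in> {(x, R x) | x. x \<in> {0..1}}" using \<open>0 \<le> x\<close> by auto
  moreover have "dist (t, R t) (x, y) < e" using t by (simp add: dist_Pair_Pair dist_real_def)
  ultimately show "\<exists>q\<in>{(x, R x) | x. x \<in> {0..1}}. dist q (x, y) < e" by blast
qed

theorem proposition4p1:
  shows "(closure {(x, R x) | x. x \<in> {0..1}}
           = {(x, R x) | x. x \<in> {0..1}} \<union> (\<Union>x\<in>dyadics - {1}. {x} \<times> Iint x))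
    \<and> (\<forall>x\<in>dyadics - {0, 1}.
           (\<exists>a b. Liminf (at_right x) (\<lambda>t. ereal (R t)) = ereal a
                 \<and> Limsup (at_right x) (\<lambda>t. ereal (R t)) = ereal b
                 \<and> Iint x = {a..b})
           \<and> R x \<notin> Iint x)"
proof (intro conjI ballI equalityI)
  show "closure {(x, R x) | x. x \<in> {0..1}}
    \<subseteq> {(x, R x) | x. x \<in> {0..1}} \<union> (\<Union>x\<in>dyadics - {1}. {x} \<times> Iint x)"
    by (rule closure_graph_R_subset)
  show "{(x, R x) | x. x \<in> {0..1}} \<union> (\<Union>x\<in>dyadics - {1}. {x} \<times> Iint x)
    \<subseteq> closure {(x, R x) | x. x \<in> {0..1}}"
    using closure_subset Iint_subset_closure_graph_R by fast
next
  fix x assume "x \<in> dyadics - {0, 1}"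
  then show "\<exists>a b. Liminf (at_right x) (\<lambda>t. ereal (R t)) = ereal a
      \<and> Limsup (at_right x) (\<lambda>t. ereal (R t)) = ereal b \<and> Iint x = {a..b}"
    and "R x \<notin> Iint x"
    using Liminf_Limsup_R_at_right R_notin_Iint by auto
qed

end
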